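(* Let $a\in\mathbb F^*$, let $g,h\in\mathcal R$ with $x^n-a=hg$, and let $c=\gamma(a,g)$. Then the map $$\psi:\mathcal S_a\to\mathcal S_{\theta^{-n}(c)},\qquad \overline f\mapsto\overline{f\,\theta^{-n}(h)}$$ is a well-defined left $\mathcal R$-module homomorphism with $\ker\psi=\mathcal R\overline g$.
   Context: $\mathbb F$ is a finite field, $\theta\in\mathrm{Aut}(\mathbb F)$, $\mathcal R=\mathbb F[x;\theta]$ the skew polynomial ring (elements $\sum f_ix^i$ with left coefficients, $xb=\theta(b)x$), $n\in\mathbb N$. Integer powers of $\theta$ act on $\mathcal R$ coefficientwise. For $e\in\mathbb F^*$, $\mathcal S_e=\mathcal R/\mathcal R(x^n-e)$ (left $\mathcal R$-module), $\overline f$ the coset of $f$, $\mathcal R\overline g$ the left submodule of $\mathcal S_a$ generated by $\overline g$. For a right divisor $g=\sum g_ix^i$ of $x^n-a$, $\gamma(a,g)=a\,g_0^{-1}\theta^n(g_0)$. *)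

theory Defs
  imports "HOL-Computational_Algebra.Polynomial"
begin

text \<open>Skew polynomial ring F[x;theta]. Elements are represented by their
coefficient lists (type 'a poly, used only as a container of coefficients,
f = sum f_i x^i with left coefficients); the multiplication is the skew one,
determined by x b = theta(b) x, i.e.
(sum_i f_i x^i)(sum_j g_j x^j) = sum_{i,j} f_i theta^i(g_j) x^(i+j).\<close>

definition is_field_aut :: "('a::field \<Rightarrow> 'a) \<Rightarrow> bool" where
  "is_field_aut \<theta> \<longleftrightarrow> bij \<theta> \<and> (\<forall>x y. \<theta> (x + y) = \<theta> x + \<theta> y)
      \<and> (\<forall>x y. \<theta> (x * y) = \<theta> x * \<theta> y) \<and> \<theta> 1 = 1"

definition skew_mult :: "('a::field \<Rightarrow> 'a) \<Rightarrow> 'a poly \<Rightarrow> 'a poly \<Rightarrow> 'a poly" where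
  "skew_mult \<theta> f g = (\<Sum>i\<le>degree f. \<Sum>j\<le>degree g.
       monom (coeff f i * (\<theta> ^^ i) (coeff g j)) (i + j))"

definition theta_pow_neg :: "('a::field \<Rightarrow> 'a) \<Rightarrow> nat \<Rightarrow> 'a \<Rightarrow> 'a" where
  "theta_pow_neg \<theta> n = (inv \<theta>) ^^ n"

definition theta_poly_neg :: "('a::field \<Rightarrow> 'a) \<Rightarrow> nat \<Rightarrow> 'a poly \<Rightarrow> 'a poly" where
  "theta_poly_neg \<theta> n p = map_poly (theta_pow_neg \<theta> n) p"

definition xn_minus :: "nat \<Rightarrow> 'a::field \<Rightarrow> 'a poly" where
  "xn_minus n e = monom 1 n - [:e:]"

text \<open>Congruence modulo the left ideal R(x^n - e): f and f' represent the
same element of S_e = R / R(x^n - e).\<close>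
definition skew_cong :: "('a::field \<Rightarrow> 'a) \<Rightarrow> nat \<Rightarrow> 'a \<Rightarrow> 'a poly \<Rightarrow> 'a poly \<Rightarrow> bool" where
  "skew_cong \<theta> n e f f' \<longleftrightarrow> (\<exists>q. f - f' = skew_mult \<theta> q (xn_minus n e))"

definition skew_gamma :: "('a::field \<Rightarrow> 'a) \<Rightarrow> nat \<Rightarrow> 'a \<Rightarrow> 'a poly \<Rightarrow> 'a" where
  "skew_gamma \<theta> n a g = a * inverse (coeff g 0) * (\<theta> ^^ n) (coeff g 0)"

end

theory Submission
  imports Defs
begin

text \<open>Write H = theta^(-n)(h). Since x^n H = h x^n, multiplying h g = x^n - a on the right by H
gives h (g H - x^n) = -a H; comparing degrees, g H - x^n is a constant, and comparing constant
terms identifies it as -theta^(-n)(c). So g H = x^n - theta^(-n)(c): right multiplication by H maps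
R(x^n - a) = R h g into R g H = R(x^n - theta^(-n)(c)), and since H is not a zero divisor,
f H lies in R g H iff f lies in R g.\<close>

lemma
  assumes "is_field_aut \<sigma>"
  shows field_aut_bij: "bij \<sigma>"
    and field_aut_add: "\<sigma> (x + y) = \<sigma> x + \<sigma> y"
    and field_aut_mult: "\<sigma> (x * y) = \<sigma> x * \<sigma> y"
    and field_aut_one: "\<sigma> 1 = 1"
    and field_aut_zero: "\<sigma> 0 = 0"
proof -
  show "bij \<sigma>" "\<sigma> (x * y) = \<sigma> x * \<sigma> y" "\<sigma> 1 = 1"
    using assms unfolding is_field_aut_def by blast+
  show add: "\<sigma> (x + y) = \<sigma> x + \<sigma> y" for x y
    using assms unfolding is_field_aut_def by blast
  have "\<sigma> 0 + \<sigma> 0 = \<sigma> 0 + 0"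
    using add[of 0 0] by simp
  then show "\<sigma> 0 = 0"
    by (rule add_left_imp_eq)
qed

lemma field_aut_eq_0_iff: "is_field_aut \<sigma> \<Longrightarrow> \<sigma> x = 0 \<longleftrightarrow> x = 0"
  by (metis bij_is_inj field_aut_bij field_aut_zero injD)

lemma field_aut_minus: "is_field_aut \<sigma> \<Longrightarrow> \<sigma> (- x) = - \<sigma> x"
  by (metis add.right_inverse add_eq_0_iff field_aut_add field_aut_zero)

lemma field_aut_inverse: "is_field_aut \<sigma> \<Longrightarrow> \<sigma> (inverse x) = inverse (\<sigma> x)"
  by (metis field_aut_mult field_aut_one field_aut_zero inverse_unique inverse_zero
      right_inverse)

lemma field_aut_sum: "is_field_aut \<sigma> \<Longrightarrow> \<sigma> (\<Sum>i\<in>A. f i) = (\<Sum>i\<in>A. \<sigma> (f i))"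
  by (induction A rule: infinite_finite_induct) (auto simp: field_aut_zero field_aut_add)

lemma field_aut_funpow: "is_field_aut \<sigma> \<Longrightarrow> is_field_aut (\<sigma> ^^ k)"
  by (induction k) (auto simp: is_field_aut_def intro: bij_comp)

lemma field_aut_inv:
  assumes "is_field_aut \<sigma>"
  shows "is_field_aut (inv \<sigma>)"
proof -
  have b: "bij \<sigma>"
    using assms by (rule field_aut_bij)
  have "\<sigma> (inv \<sigma> x) = x" and "inv \<sigma> (\<sigma> x) = x" for x
    using b by (simp_all add: bij_is_surj surj_f_inv_f bij_is_inj)
  then show ?thesis
    using b bij_imp_bij_inv field_aut_add[OF assms] field_aut_mult[OF assms] field_aut_one[OF assms]
    unfolding is_field_aut_def by metis
qed

lemma map_poly_field_aut_add:
  "is_field_aut \<sigma> \<Longrightarrow> map_poly \<sigma> (p + q) = map_poly \<sigma> p + map_poly \<sigma> q"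
  by (intro poly_eqI) (simp add: coeff_map_poly field_aut_zero field_aut_add)

lemma map_poly_field_aut_sum:
  "is_field_aut \<sigma> \<Longrightarrow> map_poly \<sigma> (\<Sum>i\<in>A. f i) = (\<Sum>i\<in>A. map_poly \<sigma> (f i))"
  by (induction A rule: infinite_finite_induct) (auto simp: map_poly_field_aut_add)

lemma map_poly_field_aut_mult:
  "is_field_aut \<sigma> \<Longrightarrow> map_poly \<sigma> (p * q) = map_poly \<sigma> p * map_poly \<sigma> q"
  by (intro poly_eqI)
    (simp add: coeff_map_poly field_aut_zero coeff_mult field_aut_sum field_aut_mult)

lemma degree_map_poly_field_aut: "is_field_aut \<sigma> \<Longrightarrow> degree (map_poly \<sigma> p) = degree p"
  by (rule degree_map_poly) (simp add: field_aut_eq_0_iff)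

lemma skew_mult_eq_sum:
  assumes "is_field_aut \<theta>"
  shows "skew_mult \<theta> f g = (\<Sum>i\<le>degree f. monom (coeff f i) i * map_poly (\<theta> ^^ i) g)"
  unfolding skew_mult_def
proof (rule sum.cong[OF refl])
  fix i
  have aut: "is_field_aut (\<theta> ^^ i)"
    using assms by (rule field_aut_funpow)
  have "map_poly (\<theta> ^^ i) g = (\<Sum>j\<le>degree g. monom ((\<theta> ^^ i) (coeff g j)) j)"
    using poly_as_sum_of_monoms[of "map_poly (\<theta> ^^ i) g"]
    by (simp add: degree_map_poly_field_aut[OF aut] coeff_map_poly field_aut_zero[OF aut])
  then show "(\<Sum>j\<le>degree g. monom (coeff f i * (\<theta> ^^ i) (coeff g j)) (i + j)) =
      monom (coeff f i) i * map_poly (\<theta> ^^ i) g"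
    by (simp add: sum_distrib_left mult_monom)
qed

lemma skew_mult_eq_sum_upto:
  assumes "is_field_aut \<theta>" and "degree f \<le> N"
  shows "skew_mult \<theta> f g = (\<Sum>i\<le>N. monom (coeff f i) i * map_poly (\<theta> ^^ i) g)"
  unfolding skew_mult_eq_sum[OF assms(1)]
  by (rule sum.mono_neutral_left) (use assms(2) in \<open>auto simp: coeff_eq_0\<close>)

lemma skew_mult_zero_left: "is_field_aut \<theta> \<Longrightarrow> skew_mult \<theta> 0 g = 0"
  by (simp add: skew_mult_eq_sum)

lemma skew_mult_add_left:
  assumes "is_field_aut \<theta>"
  shows "skew_mult \<theta> (f1 + f2) g = skew_mult \<theta> f1 g + skew_mult \<theta> f2 g"
proof -
  define N where "N = max (degree f1) (degree f2)"
  have "degree (f1 + f2) \<le> N"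
    unfolding N_def by (rule degree_add_le_max)
  then show ?thesis
    using skew_mult_eq_sum_upto[OF assms, of _ N g]
    by (simp add: N_def add_monom[symmetric] distrib_right sum.distrib)
qed

lemma skew_mult_diff_left:
  "is_field_aut \<theta> \<Longrightarrow> skew_mult \<theta> (f1 - f2) g = skew_mult \<theta> f1 g - skew_mult \<theta> f2 g"
  using skew_mult_add_left[of \<theta> "f1 - f2" f2 g] by simp

lemma skew_mult_sum_left:
  "is_field_aut \<theta> \<Longrightarrow> skew_mult \<theta> (\<Sum>i\<in>A. f i) g = (\<Sum>i\<in>A. skew_mult \<theta> (f i) g)"
  by (induction A rule: infinite_finite_induct) (auto simp: skew_mult_zero_left skew_mult_add_left)

lemma skew_mult_add_right:
  "is_field_aut \<theta> \<Longrightarrow> skew_mult \<theta> f (g1 + g2) = skew_mult \<theta> f g1 + skew_mult \<theta> f g2"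
  by (simp add: skew_mult_eq_sum map_poly_field_aut_add field_aut_funpow distrib_left sum.distrib)

lemma skew_mult_diff_right:
  "is_field_aut \<theta> \<Longrightarrow> skew_mult \<theta> f (g1 - g2) = skew_mult \<theta> f g1 - skew_mult \<theta> f g2"
  using skew_mult_add_right[of \<theta> f "g1 - g2" g2] by simp

lemma skew_mult_monom_left:
  assumes "is_field_aut \<theta>"
  shows "skew_mult \<theta> (monom c k) g = monom c k * map_poly (\<theta> ^^ k) g"
proof -
  have "skew_mult \<theta> (monom c k) g =
      (\<Sum>i\<le>k. monom (coeff (monom c k) i) i * map_poly (\<theta> ^^ i) g)"
    using assms degree_monom_le by (rule skew_mult_eq_sum_upto)
  also have "\<dots> = (\<Sum>i\<le>k. if i = k then monom c k * map_poly (\<theta> ^^ k) g else 0)"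
    by (rule sum.cong) auto
  finally show ?thesis
    by simp
qed

lemma skew_mult_const_left: "is_field_aut \<theta> \<Longrightarrow> skew_mult \<theta> [:c:] g = smult c g"
  using skew_mult_monom_left[of \<theta> c 0 g] by (simp add: monom_0)

lemma skew_mult_monom_one_right:
  assumes "is_field_aut \<theta>"
  shows "skew_mult \<theta> f (monom 1 k) = f * monom 1 k"
proof -
  have "skew_mult \<theta> f (monom 1 k) = (\<Sum>i\<le>degree f. monom (coeff f i) i * monom 1 k)"
    by (simp add: skew_mult_eq_sum[OF assms] map_poly_monom field_aut_funpow[OF assms]
        field_aut_zero field_aut_one)
  also have "\<dots> = f * monom 1 k"
    by (simp add: sum_distrib_right[symmetric] poly_as_sum_of_monoms)
  finally show ?thesis .
qed

lemma skew_mult_assoc: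
  assumes "is_field_aut \<theta>"
  shows "skew_mult \<theta> (skew_mult \<theta> f g) h = skew_mult \<theta> f (skew_mult \<theta> g h)"
proof -
  have "skew_mult \<theta> (skew_mult \<theta> f g) h = (\<Sum>i\<le>degree f. \<Sum>j\<le>degree g.
      monom (coeff f i * (\<theta> ^^ i) (coeff g j)) (i + j) * map_poly (\<theta> ^^ (i + j)) h)"
    unfolding skew_mult_def[of \<theta> f g]
    by (simp add: skew_mult_sum_left[OF assms] skew_mult_monom_left[OF assms])
  also have "\<dots> = (\<Sum>i\<le>degree f. monom (coeff f i) i * map_poly (\<theta> ^^ i) (skew_mult \<theta> g h))"
  proof (rule sum.cong[OF refl])
    fix i
    have aut: "is_field_aut (\<theta> ^^ i)"
      using assms by (rule field_aut_funpow)
    have "map_poly (\<theta> ^^ i) (skew_mult \<theta> g h) =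
        (\<Sum>j\<le>degree g. monom ((\<theta> ^^ i) (coeff g j)) j * map_poly (\<theta> ^^ (i + j)) h)"
      by (simp add: skew_mult_eq_sum[OF assms, of g h] map_poly_field_aut_sum[OF aut]
          map_poly_field_aut_mult[OF aut] map_poly_monom field_aut_zero[OF aut]
          map_poly_map_poly field_aut_zero[OF field_aut_funpow[OF assms]] funpow_add)
    then show "(\<Sum>j\<le>degree g. monom (coeff f i * (\<theta> ^^ i) (coeff g j)) (i + j) *
        map_poly (\<theta> ^^ (i + j)) h) = monom (coeff f i) i * map_poly (\<theta> ^^ i) (skew_mult \<theta> g h)"
      by (simp add: sum_distrib_left mult_monom mult.assoc[symmetric])
  qed
  also have "\<dots> = skew_mult \<theta> f (skew_mult \<theta> g h)"
    by (simp add: skew_mult_eq_sum[OF assms])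
  finally show ?thesis .
qed

lemma coeff_skew_mult:
  assumes "is_field_aut \<theta>"
  shows "coeff (skew_mult \<theta> f g) k = (\<Sum>i\<le>k. coeff f i * (\<theta> ^^ i) (coeff g (k - i)))"
proof -
  define N where "N = max k (degree f)"
  have "skew_mult \<theta> f g = (\<Sum>i\<le>N. monom (coeff f i) i * map_poly (\<theta> ^^ i) g)"
    using assms by (rule skew_mult_eq_sum_upto) (simp add: N_def)
  then have "coeff (skew_mult \<theta> f g) k =
      (\<Sum>i\<le>N. if i \<le> k then coeff f i * (\<theta> ^^ i) (coeff g (k - i)) else 0)"
    by (auto simp: coeff_sum coeff_monom_mult coeff_map_poly
        field_aut_zero[OF field_aut_funpow[OF assms]] intro!: sum.cong)
  also have "\<dots> = (\<Sum>i\<le>k. coeff f i * (\<theta> ^^ i) (coeff g (k - i)))"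
    by (rule sum.mono_neutral_cong_right) (auto simp: N_def)
  finally show ?thesis .
qed


lemma coeff_0_skew_mult: "is_field_aut \<theta> \<Longrightarrow> coeff (skew_mult \<theta> f g) 0 = coeff f 0 * coeff g 0"
  by (simp add: coeff_skew_mult)

lemma coeff_skew_mult_above_degree:
  assumes "is_field_aut \<theta>" and "k > degree f + degree g"
  shows "coeff (skew_mult \<theta> f g) k = 0"
  unfolding coeff_skew_mult[OF assms(1)]
proof (rule sum.neutral, rule ballI)
  fix i
  assume "i \<in> {..k}"
  then have "i > degree f \<or> k - i > degree g"
    using assms(2) by auto
  then show "coeff f i * (\<theta> ^^ i) (coeff g (k - i)) = 0"
    by (auto simp: coeff_eq_0 field_aut_zero[OF field_aut_funpow[OF assms(1)]])
qed

lemma coeff_skew_mult_degree: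
  assumes "is_field_aut \<theta>"
  shows "coeff (skew_mult \<theta> f g) (degree f + degree g) =
    lead_coeff f * (\<theta> ^^ degree f) (lead_coeff g)"
proof -
  let ?k = "degree f + degree g"
  have vanish: "coeff f i * (\<theta> ^^ i) (coeff g (?k - i)) = 0" if "i \<noteq> degree f" for i
    using that by (cases "i < degree f")
      (auto simp: coeff_eq_0 field_aut_zero[OF field_aut_funpow[OF assms]])
  have "(\<Sum>i\<le>?k. coeff f i * (\<theta> ^^ i) (coeff g (?k - i))) =
      (\<Sum>i\<le>?k. if i = degree f then lead_coeff f * (\<theta> ^^ degree f) (lead_coeff g) else 0)"
    by (intro sum.cong refl) (simp add: vanish)
  then show ?thesis
    by (simp add: coeff_skew_mult[OF assms])
qed

lemma coeff_skew_mult_degree_neq_0: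
  assumes "is_field_aut \<theta>" and "f \<noteq> 0" and "g \<noteq> 0"
  shows "coeff (skew_mult \<theta> f g) (degree f + degree g) \<noteq> 0"
  using assms by (simp add: coeff_skew_mult_degree field_aut_eq_0_iff[OF field_aut_funpow])

lemma degree_skew_mult:
  assumes "is_field_aut \<theta>" and "f \<noteq> 0" and "g \<noteq> 0"
  shows "degree (skew_mult \<theta> f g) = degree f + degree g"
proof (rule antisym)
  show "degree (skew_mult \<theta> f g) \<le> degree f + degree g"
    using coeff_skew_mult_above_degree[OF assms(1)] by (intro degree_le) auto
  show "degree f + degree g \<le> degree (skew_mult \<theta> f g)"
    using coeff_skew_mult_degree_neq_0[OF assms] by (rule le_degree)
qed

lemma skew_mult_zero_right: "is_field_aut \<theta> \<Longrightarrow> skew_mult \<theta> f 0 = 0"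
  by (simp add: skew_mult_eq_sum map_poly_0)

lemma skew_mult_eq_0_iff:
  assumes "is_field_aut \<theta>"
  shows "skew_mult \<theta> f g = 0 \<longleftrightarrow> f = 0 \<or> g = 0"
  by (metis assms coeff_0 coeff_skew_mult_degree_neq_0 skew_mult_zero_left skew_mult_zero_right)


lemma theta_pow_neg_eq_inv: "is_field_aut \<theta> \<Longrightarrow> theta_pow_neg \<theta> n = inv (\<theta> ^^ n)"
  by (simp add: theta_pow_neg_def inv_fn field_aut_bij)

lemma theta_poly_neg_eq_map_poly_inv:
  "is_field_aut \<theta> \<Longrightarrow> theta_poly_neg \<theta> n p = map_poly (inv (\<theta> ^^ n)) p"
  by (simp add: theta_poly_neg_def theta_pow_neg_eq_inv)

lemma coeff_xn_minus:
  "coeff (xn_minus n e) k = (if k = n then 1 else 0) - (if k = 0 then e else 0)"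
  by (cases k) (simp_all add: xn_minus_def)

lemma xn_minus_neq_0:
  assumes "n \<ge> 1"
  shows "xn_minus n e \<noteq> 0"
proof
  assume "xn_minus n e = 0"
  then have "coeff (xn_minus n e) n = 0"
    by simp
  with assms show False
    by (simp add: coeff_xn_minus)
qed

lemma skew_mult_xn_twist:
  assumes "is_field_aut \<theta>"
  shows "skew_mult \<theta> (monom 1 n) (map_poly (inv (\<theta> ^^ n)) p) = p * monom 1 n"
proof -
  have aut: "is_field_aut (\<theta> ^^ n)" and aut_inv: "is_field_aut (inv (\<theta> ^^ n))"
    using assms by (simp_all add: field_aut_funpow field_aut_inv)
  have "(\<theta> ^^ n) \<circ> inv (\<theta> ^^ n) = id"
    using field_aut_bij[OF aut] bij_is_surj surj_iff by blast
  then have "map_poly (\<theta> ^^ n) (map_poly (inv (\<theta> ^^ n)) p) = p"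
    by (simp add: map_poly_map_poly field_aut_zero[OF aut] field_aut_zero[OF aut_inv])
  then show ?thesis
    by (simp add: skew_mult_monom_left[OF assms] mult.commute)
qed


lemma skew_mult_factor_twist_expand:
  assumes "is_field_aut \<theta>" and factor: "xn_minus n a = skew_mult \<theta> h g"
  defines "H \<equiv> map_poly (inv (\<theta> ^^ n)) h"
  shows "skew_mult \<theta> h (skew_mult \<theta> g H) = h * monom 1 n - smult a H"
proof -
  have "skew_mult \<theta> h (skew_mult \<theta> g H) = skew_mult \<theta> (xn_minus n a) H"
    by (simp add: skew_mult_assoc[OF assms(1)] factor)
  also have "\<dots> = skew_mult \<theta> (monom 1 n) H - skew_mult \<theta> [:a:] H"
    by (simp add: xn_minus_def skew_mult_diff_left[OF assms(1)])
  also have "\<dots> = h * monom 1 n - smult a H"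
    by (simp add: H_def skew_mult_xn_twist[OF assms(1)] skew_mult_const_left[OF assms(1)])
  finally show ?thesis .
qed

lemma skew_mult_twist_eq_xn_plus_const:
  assumes aut: "is_field_aut \<theta>" and "n \<ge> 1" and "a \<noteq> 0"
    and factor: "xn_minus n a = skew_mult \<theta> h g"
  obtains \<delta> where "skew_mult \<theta> g (map_poly (inv (\<theta> ^^ n)) h) = monom 1 n + [:\<delta>:]"
proof -
  define H where "H = map_poly (inv (\<theta> ^^ n)) h"
  define D where "D = skew_mult \<theta> g H - monom 1 n"
  have "h \<noteq> 0"
    using xn_minus_neq_0[OF \<open>n \<ge> 1\<close>] factor skew_mult_eq_0_iff[OF aut] by metis
  have "skew_mult \<theta> h D = - smult a H"
    using skew_mult_factor_twist_expand[OF aut factor]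
    by (simp add: D_def H_def skew_mult_diff_right[OF aut] skew_mult_monom_one_right[OF aut])
  moreover have "degree (- smult a H) = degree h"
    using \<open>a \<noteq> 0\<close> by (simp add: H_def degree_map_poly_field_aut field_aut_inv field_aut_funpow aut)
  ultimately have "degree D = 0"
    using degree_skew_mult[OF aut \<open>h \<noteq> 0\<close>, of D] by (cases "D = 0") auto
  then obtain \<delta> where "D = [:\<delta>:]"
    using degree0_coeffs by blast
  then show thesis
    using that unfolding D_def H_def by (simp add: algebra_simps)
qed


lemma skew_mult_twist_eq_xn_minus_gamma:
  assumes aut: "is_field_aut \<theta>" and "n \<ge> 1" and "a \<noteq> 0"
    and factor: "xn_minus n a = skew_mult \<theta> h g"
  shows "skew_mult \<theta> g (theta_poly_neg \<theta> n h) = xn_minus n (theta_pow_neg \<theta> n (skew_gamma \<theta> n a g))"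
proof -
  define \<psi> where "\<psi> = inv (\<theta> ^^ n)"
  have aut_pow: "is_field_aut (\<theta> ^^ n)" and aut_\<psi>: "is_field_aut \<psi>"
    using aut by (simp_all add: \<psi>_def field_aut_funpow field_aut_inv)
  obtain \<delta> where g_H: "skew_mult \<theta> g (map_poly \<psi> h) = monom 1 n + [:\<delta>:]"
    using skew_mult_twist_eq_xn_plus_const[OF assms] unfolding \<psi>_def .
  have "coeff h 0 * coeff g 0 = - a"
    using arg_cong[OF factor, of "\<lambda>p. coeff p 0"] \<open>n \<ge> 1\<close>
    by (simp add: coeff_0_skew_mult[OF aut] coeff_xn_minus)
  moreover from this have g0: "coeff g 0 \<noteq> 0"
    using \<open>a \<noteq> 0\<close> by auto
  ultimately have h0: "coeff h 0 = - a * inverse (coeff g 0)"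
    by (simp add: field_simps)
  have "coeff h 0 * \<delta> = - a * \<psi> (coeff h 0)"
    using arg_cong[OF skew_mult_factor_twist_expand[OF aut factor], of "\<lambda>p. coeff p 0"] \<open>n \<ge> 1\<close>
    by (simp add: \<psi>_def[symmetric] g_H coeff_0_skew_mult[OF aut] mult.commute[of h]
        coeff_monom_mult coeff_map_poly field_aut_zero[OF aut_\<psi>])
  also have "\<psi> (coeff h 0) = - \<psi> a * inverse (\<psi> (coeff g 0))"
    unfolding h0 by (simp add: field_aut_minus[OF aut_\<psi>] field_aut_mult[OF aut_\<psi>]
        field_aut_inverse[OF aut_\<psi>])
  finally have "a * - \<delta> = a * (\<psi> a * inverse (\<psi> (coeff g 0)) * coeff g 0)"
    using g0 unfolding h0 by (simp add: field_simps)
  then have "\<delta> = - (\<psi> a * inverse (\<psi> (coeff g 0)) * coeff g 0)"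
    using \<open>a \<noteq> 0\<close> by (metis minus_minus mult_left_cancel)
  also have "\<psi> a * inverse (\<psi> (coeff g 0)) * coeff g 0 = \<psi> (skew_gamma \<theta> n a g)"
    using field_aut_bij[OF aut_pow]
    by (simp add: \<psi>_def skew_gamma_def field_aut_mult[OF aut_\<psi>[unfolded \<psi>_def]]
        field_aut_inverse[OF aut_\<psi>[unfolded \<psi>_def]] bij_is_inj)
  finally show ?thesis
    using g_H by (simp add: \<psi>_def theta_poly_neg_eq_map_poly_inv[OF aut]
        theta_pow_neg_eq_inv[OF aut] xn_minus_def)
qed


lemma skew_cong_refl: "is_field_aut \<theta> \<Longrightarrow> skew_cong \<theta> n e f f"
  unfolding skew_cong_def by (metis diff_self skew_mult_zero_left)

lemma skew_cong_mult_right: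
  assumes aut: "is_field_aut \<theta>"
    and g_H: "skew_mult \<theta> g H = xn_minus n b" and factor: "xn_minus n a = skew_mult \<theta> h g"
    and "skew_cong \<theta> n a f f'"
  shows "skew_cong \<theta> n b (skew_mult \<theta> f H) (skew_mult \<theta> f' H)"
proof -
  obtain q where "f - f' = skew_mult \<theta> q (xn_minus n a)"
    using \<open>skew_cong \<theta> n a f f'\<close> unfolding skew_cong_def by blast
  then have "skew_mult \<theta> f H - skew_mult \<theta> f' H = skew_mult \<theta> (skew_mult \<theta> q h) (xn_minus n b)"
    by (simp add: skew_mult_diff_left[OF aut, symmetric] factor skew_mult_assoc[OF aut] g_H)
  then show ?thesis
    unfolding skew_cong_def by blast
qed

lemma skew_cong_mult_right_0_iff:
  assumes aut: "is_field_aut \<theta>" and "n \<ge> 1"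
    and g_H: "skew_mult \<theta> g H = xn_minus n b" and factor: "xn_minus n a = skew_mult \<theta> h g"
  shows "skew_cong \<theta> n b (skew_mult \<theta> f H) 0 \<longleftrightarrow> (\<exists>r. skew_cong \<theta> n a f (skew_mult \<theta> r g))"
proof
  assume "skew_cong \<theta> n b (skew_mult \<theta> f H) 0"
  then obtain q where "skew_mult \<theta> f H = skew_mult \<theta> q (skew_mult \<theta> g H)"
    unfolding skew_cong_def g_H by auto
  then have "skew_mult \<theta> (f - skew_mult \<theta> q g) H = 0"
    by (simp add: skew_mult_diff_left[OF aut] skew_mult_assoc[OF aut])
  moreover have "H \<noteq> 0"
    using g_H xn_minus_neq_0[OF \<open>n \<ge> 1\<close>] skew_mult_zero_right[OF aut] by metis
  ultimately have "f = skew_mult \<theta> q g"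
    by (simp add: skew_mult_eq_0_iff[OF aut])
  then show "\<exists>r. skew_cong \<theta> n a f (skew_mult \<theta> r g)"
    using skew_cong_refl[OF aut] by blast
next
  assume "\<exists>r. skew_cong \<theta> n a f (skew_mult \<theta> r g)"
  then obtain r q where "f - skew_mult \<theta> r g = skew_mult \<theta> q (xn_minus n a)"
    unfolding skew_cong_def by blast
  then have "f = skew_mult \<theta> (r + skew_mult \<theta> q h) g"
    by (simp add: skew_mult_add_left[OF aut] skew_mult_assoc[OF aut] factor algebra_simps)
  then have "skew_mult \<theta> f H - 0 = skew_mult \<theta> (r + skew_mult \<theta> q h) (xn_minus n b)"
    by (simp add: skew_mult_assoc[OF aut] g_H)
  then show "skew_cong \<theta> n b (skew_mult \<theta> f H) 0"
    unfolding skew_cong_def by blast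
qed

theorem proposition6p5:
  fixes \<theta> :: "'a::{finite,field} \<Rightarrow> 'a" and n :: nat and a :: 'a and g h :: "'a poly"
  assumes aut: "is_field_aut \<theta>"
    and n: "n \<ge> 1"
    and a: "a \<noteq> 0"
    and fact: "xn_minus n a = skew_mult \<theta> h g"
  defines "c \<equiv> skew_gamma \<theta> n a g"
  shows
    \<comment> \<open>well-defined\<close>
    "(\<forall>f f'. skew_cong \<theta> n a f f' \<longrightarrow>
        skew_cong \<theta> n (theta_pow_neg \<theta> n c)
          (skew_mult \<theta> f (theta_poly_neg \<theta> n h)) (skew_mult \<theta> f' (theta_poly_neg \<theta> n h)))
     \<comment> \<open>left R-module homomorphism: psi(r f1 + f2) = r psi(f1) + psi(f2)\<close>
     \<and> (\<forall>r f1 f2.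
        skew_cong \<theta> n (theta_pow_neg \<theta> n c)
          (skew_mult \<theta> (skew_mult \<theta> r f1 + f2) (theta_poly_neg \<theta> n h))
          (skew_mult \<theta> r (skew_mult \<theta> f1 (theta_poly_neg \<theta> n h))
             + skew_mult \<theta> f2 (theta_poly_neg \<theta> n h)))
     \<comment> \<open>kernel is R g-bar\<close>
     \<and> (\<forall>f. skew_cong \<theta> n (theta_pow_neg \<theta> n c) (skew_mult \<theta> f (theta_poly_neg \<theta> n h)) 0
          \<longleftrightarrow> (\<exists>r. skew_cong \<theta> n a f (skew_mult \<theta> r g)))"
proof (intro conjI allI impI)
  have g_H: "skew_mult \<theta> g (theta_poly_neg \<theta> n h) = xn_minus n (theta_pow_neg \<theta> n c)"
    unfolding c_def using aut n a fact by (rule skew_mult_twist_eq_xn_minus_gamma)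
  show "skew_cong \<theta> n (theta_pow_neg \<theta> n c)
      (skew_mult \<theta> f (theta_poly_neg \<theta> n h)) (skew_mult \<theta> f' (theta_poly_neg \<theta> n h))"
    if "skew_cong \<theta> n a f f'" for f f'
    using aut g_H fact that by (rule skew_cong_mult_right)
  show "skew_cong \<theta> n (theta_pow_neg \<theta> n c)
      (skew_mult \<theta> (skew_mult \<theta> r f1 + f2) (theta_poly_neg \<theta> n h))
      (skew_mult \<theta> r (skew_mult \<theta> f1 (theta_poly_neg \<theta> n h)) + skew_mult \<theta> f2 (theta_poly_neg \<theta> n h))"
    for r f1 f2
    using skew_cong_refl[OF aut] by (simp add: skew_mult_add_left[OF aut] skew_mult_assoc[OF aut])
  show "skew_cong \<theta> n (theta_pow_neg \<theta> n c) (skew_mult \<theta> f (theta_poly_neg \<theta> n h)) 0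
      \<longleftrightarrow> (\<exists>r. skew_cong \<theta> n a f (skew_mult \<theta> r g))" for f
    using aut n g_H fact by (rule skew_cong_mult_right_0_iff)
qed

end
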